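(* Let $R$ be a Noetherian Banach–Tate ring with norm $|\cdot|$ and multiplicative pseudo-uniformizer $\varpi$, and assume there exists a continuous ring homomorphism $\mathbb{Z}_p\to R$. Then there exists a norm $|\cdot|'$ on $R$ such that: $(R,|\cdot|')$ is a Banach–Tate $\mathbb{Z}_p$-algebra; $|\cdot|'$ is bounded-equivalent to $|\cdot|^s$ for some real $s>0$; and $\varpi$ is a multiplicative pseudo-uniformizer for $|\cdot|'$.
   Context: Norms are non-archimedean, submultiplicative, with $|1|=1$ and $|r|=0\iff r=0$. A Banach–Tate ring is a complete normed ring containing a unit $\varpi$ with $|\varpi|<1$ and $|\varpi s|=|\varpi||s|$ for all $s$ (a multiplicative pseudo-uniformizer). A Banach–Tate $\mathbb{Z}_p$-algebra is a Banach–Tate ring $R$ together with a ring homomorphism $\mathbb{Z}_p\to R$ which is norm-decreasing for the usual $p$-adic norm $|x|_p=p^{-\mathrm{ord}_p(x)}$ on $\mathbb{Z}_p$. Two norms $|\cdot|_1,|\cdot|_2$ are bounded-equivalent if there exist $C_1,C_2>0$ with $C_1|r|_1\le|r|_2\le C_2|r|_1$ for all $r$. *)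

theory Defs
  imports Complex_Main "HOL-Computational_Algebra.Primes"
begin

definition is_ring_norm :: "('a::comm_ring_1 \<Rightarrow> real) \<Rightarrow> bool" where
  "is_ring_norm nrm \<longleftrightarrow>
     (\<forall>r. 0 \<le> nrm r) \<and>
     (\<forall>r. nrm r = 0 \<longleftrightarrow> r = 0) \<and>
     (\<forall>r. nrm (- r) = nrm r) \<and>
     (\<forall>r s. nrm (r + s) \<le> max (nrm r) (nrm s)) \<and>
     (\<forall>r s. nrm (r * s) \<le> nrm r * nrm s) \<and>
     nrm 1 = 1"

definition norm_complete :: "('a::comm_ring_1 \<Rightarrow> real) \<Rightarrow> bool" where
  "norm_complete nrm \<longleftrightarrow>
     (\<forall>X :: nat \<Rightarrow> 'a. (\<forall>e>0. \<exists>N. \<forall>m\<ge>N. \<forall>n\<ge>N. nrm (X m - X n) < e) \<longrightarrow>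
        (\<exists>L. (\<lambda>n. nrm (X n - L)) \<longlonglongrightarrow> 0))"

definition mult_pseudo_uniformizer :: "('a::comm_ring_1 \<Rightarrow> real) \<Rightarrow> 'a \<Rightarrow> bool" where
  "mult_pseudo_uniformizer nrm w \<longleftrightarrow>
     w dvd 1 \<and> nrm w < 1 \<and> (\<forall>s. nrm (w * s) = nrm w * nrm s)"

definition banach_tate_ring :: "('a::comm_ring_1 \<Rightarrow> real) \<Rightarrow> bool" where
  "banach_tate_ring nrm \<longleftrightarrow> is_ring_norm nrm \<and> norm_complete nrm \<and>
     (\<exists>w. mult_pseudo_uniformizer nrm w)"

definition bounded_equivalent :: "('a \<Rightarrow> real) \<Rightarrow> ('a \<Rightarrow> real) \<Rightarrow> bool" where
  "bounded_equivalent n1 n2 \<longleftrightarrow>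
     (\<exists>C1 C2. C1 > 0 \<and> C2 > 0 \<and> (\<forall>r. C1 * n1 r \<le> n2 r \<and> n2 r \<le> C2 * n1 r))"

definition ring_ideal :: "'a::comm_ring_1 set \<Rightarrow> bool" where
  "ring_ideal I \<longleftrightarrow> 0 \<in> I \<and> (\<forall>x\<in>I. \<forall>y\<in>I. x + y \<in> I) \<and> (\<forall>r. \<forall>x\<in>I. r * x \<in> I)"

definition finitely_generated_ideal :: "'a::comm_ring_1 set \<Rightarrow> bool" where
  "finitely_generated_ideal I \<longleftrightarrow>
     (\<exists>S. finite S \<and> I = {\<Sum>s\<in>S. c s * s | c. True})"

definition noetherian_ring :: "'a::comm_ring_1 itself \<Rightarrow> bool" where
  "noetherian_ring _ \<longleftrightarrow> (\<forall>I :: 'a set. ring_ideal I \<longrightarrow> finitely_generated_ideal I)"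

text \<open>An element of Z_p is represented by x with x n in {0..<p^n} its residue mod p^n.\<close>
definition Zp :: "nat \<Rightarrow> (nat \<Rightarrow> int) set" where
  "Zp p = {x. \<forall>n. 0 \<le> x n \<and> x n < int p ^ n \<and> x (Suc n) mod int p ^ n = x n}"

definition zp_zero :: "nat \<Rightarrow> nat \<Rightarrow> int" where
  "zp_zero p = (\<lambda>n. 0)"

definition zp_one :: "nat \<Rightarrow> nat \<Rightarrow> int" where
  "zp_one p = (\<lambda>n. 1 mod int p ^ n)"

definition zp_add :: "nat \<Rightarrow> (nat \<Rightarrow> int) \<Rightarrow> (nat \<Rightarrow> int) \<Rightarrow> nat \<Rightarrow> int" where
  "zp_add p x y = (\<lambda>n. (x n + y n) mod int p ^ n)"

definition zp_mul :: "nat \<Rightarrow> (nat \<Rightarrow> int) \<Rightarrow> (nat \<Rightarrow> int) \<Rightarrow> nat \<Rightarrow> int" where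
  "zp_mul p x y = (\<lambda>n. (x n * y n) mod int p ^ n)"

definition zp_neg :: "nat \<Rightarrow> (nat \<Rightarrow> int) \<Rightarrow> nat \<Rightarrow> int" where
  "zp_neg p x = (\<lambda>n. (- x n) mod int p ^ n)"

text \<open>ord_p x = largest n with p^n dividing x, i.e. least n with x mod p^(n+1) nonzero.\<close>
definition zp_ord :: "nat \<Rightarrow> (nat \<Rightarrow> int) \<Rightarrow> nat" where
  "zp_ord p x = (LEAST n. x (Suc n) \<noteq> 0)"

definition padic_norm :: "nat \<Rightarrow> (nat \<Rightarrow> int) \<Rightarrow> real" where
  "padic_norm p x = (if x = zp_zero p then 0 else real p powr (- real (zp_ord p x)))"

definition zp_ring_hom :: "nat \<Rightarrow> ((nat \<Rightarrow> int) \<Rightarrow> 'a::comm_ring_1) \<Rightarrow> bool" where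
  "zp_ring_hom p \<phi> \<longleftrightarrow>
     \<phi> (zp_one p) = 1 \<and>
     (\<forall>x\<in>Zp p. \<forall>y\<in>Zp p. \<phi> (zp_add p x y) = \<phi> x + \<phi> y) \<and>
     (\<forall>x\<in>Zp p. \<forall>y\<in>Zp p. \<phi> (zp_mul p x y) = \<phi> x * \<phi> y)"

definition zp_continuous :: "nat \<Rightarrow> ('a::comm_ring_1 \<Rightarrow> real) \<Rightarrow> ((nat \<Rightarrow> int) \<Rightarrow> 'a) \<Rightarrow> bool" where
  "zp_continuous p nrm \<phi> \<longleftrightarrow>
     (\<forall>x\<in>Zp p. \<forall>e>0. \<exists>d>0. \<forall>y\<in>Zp p.
        padic_norm p (zp_add p y (zp_neg p x)) < d \<longrightarrow> nrm (\<phi> y - \<phi> x) < e)"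

definition banach_tate_Zp_algebra ::
    "nat \<Rightarrow> ('a::comm_ring_1 \<Rightarrow> real) \<Rightarrow> ((nat \<Rightarrow> int) \<Rightarrow> 'a) \<Rightarrow> bool" where
  "banach_tate_Zp_algebra p nrm \<phi> \<longleftrightarrow>
     banach_tate_ring nrm \<and> zp_ring_hom p \<phi> \<and>
     (\<forall>x\<in>Zp p. nrm (\<phi> x) \<le> padic_norm p x)"

end

theory Submission
  imports Defs
begin

(* Continuity of phi at 0 gives |phi(p)^M| < 1 for some M, hence |phi x| <= K c^(ord x) with c < 1.
  The weighted supremum N y = sup_x |phi(x) y| / c^(ord x) is then a norm on R, as a module over
  itself, equivalent to |.| and on which phi(x) acts with operator norm at most c^(ord x).  The
  operator norm of N is therefore a ring norm equivalent to |.|, still multiplicative on w, with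
  |phi x|' <= c^(ord x); raising it to the power s with c^s = 1/p makes phi norm-decreasing. *)

lemma Zp_memD: "x \<in> Zp p \<Longrightarrow> 0 \<le> x n \<and> x n < int p ^ n \<and> x (Suc n) mod int p ^ n = x n"
  by (simp add: Zp_def)

lemma Zp_mod_power:
  assumes "x \<in> Zp p" "k \<le> m"
  shows "x m mod int p ^ k = x k"
  using assms(2)
proof (induction m rule: dec_induct)
  case base
  show ?case using Zp_memD[OF assms(1), of k] by simp
next
  case (step m)
  have "x (Suc m) mod int p ^ k = x (Suc m) mod int p ^ m mod int p ^ k"
    using step.hyps(1) by (simp add: le_imp_power_dvd mod_mod_cancel)
  also have "\<dots> = x k" using Zp_memD[OF assms(1), of m] step.IH by simp
  finally show ?case .
qed

lemma Zp_power_dvd: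
  assumes "x \<in> Zp p" "x n = 0" "n \<le> m"
  shows "int p ^ n dvd x m"
  using Zp_mod_power[OF assms(1,3)] assms(2) by (simp add: dvd_eq_mod_eq_0)

lemma Zp_eq_0_below: "x \<in> Zp p \<Longrightarrow> x n = 0 \<Longrightarrow> k \<le> n \<Longrightarrow> x k = 0"
  using Zp_mod_power[of x p k n] by simp

lemma zp_zero_in_Zp: "0 < p \<Longrightarrow> zp_zero p \<in> Zp p"
  by (simp add: Zp_def zp_zero_def)

lemma zp_add_zp_neg_zp_zero: "y \<in> Zp p \<Longrightarrow> zp_add p y (zp_neg p (zp_zero p)) = y"
  using Zp_memD[of y p] by (auto simp: zp_add_def zp_neg_def zp_zero_def)

lemma zp_mul_in_Zp:
  assumes "x \<in> Zp p" "y \<in> Zp p" "0 < p"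
  shows "zp_mul p x y \<in> Zp p"
  unfolding Zp_def zp_mul_def
proof (intro CollectI allI conjI)
  fix n
  have "x (Suc n) * y (Suc n) mod int p ^ Suc n mod int p ^ n = x (Suc n) * y (Suc n) mod int p ^ n"
    by (simp add: mod_mod_cancel)
  also have "\<dots> = (x (Suc n) mod int p ^ n) * (y (Suc n) mod int p ^ n) mod int p ^ n"
    by (simp add: mod_mult_eq)
  also have "\<dots> = x n * y n mod int p ^ n" using Zp_memD[OF assms(1)] Zp_memD[OF assms(2)] by simp
  finally show "x (Suc n) * y (Suc n) mod int p ^ Suc n mod int p ^ n = x n * y n mod int p ^ n" .
qed (use assms(3) in simp_all)

lemma zp_mul_eq_0:
  assumes "x \<in> Zp p" "y \<in> Zp p" "x a = 0" "y b = 0"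
  shows "zp_mul p x y (a + b) = 0"
proof -
  have "int p ^ a * int p ^ b dvd x (a + b) * y (a + b)"
    using Zp_power_dvd[OF assms(1,3)] Zp_power_dvd[OF assms(2,4)] by (simp add: mult_dvd_mono)
  then show ?thesis by (simp add: zp_mul_def power_add)
qed

lemma Zp_at_zp_ord:
  assumes "x \<in> Zp p"
  shows "x (zp_ord p x) = 0"
proof (cases "zp_ord p x")
  case 0
  then show ?thesis using Zp_memD[OF assms, of 0] by simp
next
  case (Suc j)
  then have "j < zp_ord p x" by simp
  then have "\<not> x (Suc j) \<noteq> 0" unfolding zp_ord_def by (rule not_less_Least)
  then show ?thesis using Suc by simp
qed

lemma zp_ord_ge:
  assumes "x \<in> Zp p" "x \<noteq> zp_zero p" "x n = 0"
  shows "n \<le> zp_ord p x"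
proof -
  obtain k where k: "x k \<noteq> 0" using assms(2) by (auto simp: zp_zero_def)
  then obtain j where "x (Suc j) \<noteq> 0" using Zp_memD[OF assms(1), of 0] by (cases k) auto
  then have "x (Suc (zp_ord p x)) \<noteq> 0" unfolding zp_ord_def by (rule LeastI)
  then have "\<not> Suc (zp_ord p x) \<le> n" using Zp_eq_0_below[OF assms(1,3)] by blast
  then show ?thesis by simp
qed

lemma zp_ord_mul:
  assumes "x \<in> Zp p" "y \<in> Zp p" "0 < p" "zp_mul p x y \<noteq> zp_zero p"
  shows "zp_ord p x + zp_ord p y \<le> zp_ord p (zp_mul p x y)"
  using zp_ord_ge[OF zp_mul_in_Zp[OF assms(1-3)] assms(4)]
    zp_mul_eq_0[OF assms(1,2) Zp_at_zp_ord[OF assms(1)] Zp_at_zp_ord[OF assms(2)]] .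

lemma padic_norm_eq:
  assumes "0 < p" "x \<noteq> zp_zero p"
  shows "padic_norm p x = (1 / real p) ^ zp_ord p x"
  using assms by (simp add: padic_norm_def powr_minus powr_realpow power_one_over inverse_eq_divide)

lemma padic_norm_le:
  assumes "2 \<le> p" "y \<in> Zp p" "y m = 0"
  shows "padic_norm p y \<le> (1 / real p) ^ m"
proof (cases "y = zp_zero p")
  case False
  then show ?thesis
    using assms zp_ord_ge[OF assms(2) False assms(3)]
    by (simp add: padic_norm_eq power_decreasing)
qed (simp add: padic_norm_def)

definition zp_of_int :: "nat \<Rightarrow> int \<Rightarrow> nat \<Rightarrow> int" where
  "zp_of_int p z = (\<lambda>k. z mod int p ^ k)"

lemma zp_of_int_in_Zp: "0 < p \<Longrightarrow> zp_of_int p z \<in> Zp p"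
  by (simp add: Zp_def zp_of_int_def mod_mod_cancel)

lemma zp_add_zp_of_int: "zp_add p (zp_of_int p a) (zp_of_int p b) = zp_of_int p (a + b)"
  by (simp add: zp_add_def zp_of_int_def mod_add_eq)

lemma zp_of_int_0: "zp_of_int p 0 = zp_zero p"
  by (simp add: zp_of_int_def zp_zero_def)

lemma zp_of_int_1: "zp_of_int p 1 = zp_one p"
  by (simp add: zp_of_int_def zp_one_def)

lemma zp_one_in_Zp: "0 < p \<Longrightarrow> zp_one p \<in> Zp p"
  using zp_of_int_in_Zp[of p 1] by (simp add: zp_of_int_1)

lemma zp_ord_zp_one: "2 \<le> p \<Longrightarrow> zp_ord p (zp_one p) = 0"
  unfolding zp_ord_def zp_one_def by (rule Least_equality) auto

lemma Zp_factor_p_power: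
  assumes "x \<in> Zp p" "x n = 0" "0 < p"
  shows "\<exists>u\<in>Zp p. x = zp_mul p (zp_of_int p (int p ^ n)) u"
proof -
  define P where "P = int p"
  have P: "P ^ n > 0" using assms(3) by (simp add: P_def)
  define u where "u = (\<lambda>k. x (k + n) div P ^ n)"
  have x_eq: "x (k + n) = P ^ n * u k" for k
    using Zp_power_dvd[OF assms(1,2)] by (simp add: u_def P_def)
  have "u \<in> Zp p"
    unfolding Zp_def
  proof (intro CollectI allI conjI)
    fix k
    have r: "0 \<le> x (k + n)" "x (k + n) < P ^ n * P ^ k"
      using Zp_memD[OF assms(1), of "k + n"] by (auto simp: P_def power_add mult.commute)
    show "0 \<le> u k" using r(1) P by (simp add: u_def pos_imp_zdiv_nonneg_iff)
    have "P ^ n * u k < P ^ n * P ^ k" using r(2) x_eq[of k] by simp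
    then have "u k < P ^ k" using P by simp
    then show "u k < int p ^ k" by (simp add: P_def)
    have "P ^ n * (u (Suc k) mod P ^ k) = (P ^ n * u (Suc k)) mod (P ^ n * P ^ k)"
      by (rule mult_mod_right)
    also have "\<dots> = x (Suc k + n) mod P ^ (k + n)"
      by (simp only: x_eq power_add mult.commute)
    also have "\<dots> = P ^ n * u k"
      using Zp_mod_power[OF assms(1), of "k + n" "Suc k + n"] x_eq by (simp add: P_def)
    finally show "u (Suc k) mod int p ^ k = u k" using assms(3) by (simp add: P_def)
  qed
  moreover have "x = zp_mul p (zp_of_int p (int p ^ n)) u"
  proof
    fix k
    have "zp_mul p (zp_of_int p (P ^ n)) u k = x (k + n) mod P ^ k"
      by (simp add: zp_mul_def zp_of_int_def P_def mod_mult_left_eq x_eq)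
    also have "\<dots> = x k" using Zp_mod_power[OF assms(1), of k "k + n"] by (simp add: P_def)
    finally show "x k = zp_mul p (zp_of_int p (int p ^ n)) u k" by (simp add: P_def)
  qed
  ultimately show ?thesis by blast
qed

lemma Zp_split_at:
  assumes "u \<in> Zp p" "0 < p"
  shows "\<exists>y\<in>Zp p. y m = 0 \<and> zp_add p (zp_of_int p (u m)) y = u"
proof -
  define y where "y = (\<lambda>k. (u k - u m) mod int p ^ k)"
  have "y \<in> Zp p"
    unfolding Zp_def y_def
  proof (intro CollectI allI conjI)
    fix k
    have "(u (Suc k) - u m) mod int p ^ Suc k mod int p ^ k = (u (Suc k) - u m) mod int p ^ k"
      by (simp add: mod_mod_cancel)
    also have "\<dots> = (u (Suc k) mod int p ^ k - u m) mod int p ^ k"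
      by (simp add: mod_diff_left_eq)
    finally show "(u (Suc k) - u m) mod int p ^ Suc k mod int p ^ k = (u k - u m) mod int p ^ k"
      using Zp_memD[OF assms(1), of k] by simp
  qed (use assms(2) in simp_all)
  moreover have "zp_add p (zp_of_int p (u m)) y = u"
  proof
    fix k
    show "zp_add p (zp_of_int p (u m)) y k = u k"
      using Zp_memD[OF assms(1), of k] by (simp add: zp_add_def zp_of_int_def y_def mod_add_eq)
  qed
  moreover have "y m = 0" by (simp add: y_def)
  ultimately show ?thesis by blast
qed

locale ring_norm =
  fixes nrm :: "'a::comm_ring_1 \<Rightarrow> real"
  assumes is_ring_norm: "is_ring_norm nrm"
begin

lemma nonneg: "0 \<le> nrm r"
  and eq_0_iff: "nrm r = 0 \<longleftrightarrow> r = 0"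
  and minus: "nrm (- r) = nrm r"
  and add_le_max: "nrm (r + s) \<le> max (nrm r) (nrm s)"
  and mult_le: "nrm (r * s) \<le> nrm r * nrm s"
  and one: "nrm 1 = 1"
  using is_ring_norm unfolding is_ring_norm_def by blast+

lemma zero: "nrm 0 = 0"
  by (simp add: eq_0_iff)

lemma one_nonzero: "(1::'a) \<noteq> 0"
  using one zero by auto

lemma of_nat_le_1: "nrm (of_nat n) \<le> 1"
proof (induction n)
  case (Suc n)
  have "nrm (of_nat n + 1) \<le> max (nrm (of_nat n)) (nrm 1)" by (rule add_le_max)
  then show ?case using Suc one by (simp add: add.commute)
qed (simp add: zero)

lemma power_le: "nrm (z ^ n) \<le> nrm z ^ n"
proof (induction n)
  case (Suc n)
  have "nrm (z * z ^ n) \<le> nrm z * nrm (z ^ n)" by (rule mult_le)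
  also have "\<dots> \<le> nrm z * nrm z ^ n" using Suc nonneg by (intro mult_left_mono)
  finally show ?case by simp
qed (simp add: one)

lemma mult_pseudo_uniformizer_pos:
  assumes "mult_pseudo_uniformizer nrm w"
  shows "0 < nrm w"
proof -
  have "w \<noteq> 0" using assms one_nonzero by (auto simp: mult_pseudo_uniformizer_def)
  then show ?thesis using nonneg[of w] eq_0_iff[of w] by linarith
qed

text \<open>Writing \<open>n = M q + r\<close>, one has \<open>nrm (t ^ n) \<le> nrm (t ^ M) ^ q\<close>; taking \<open>c\<close> an \<open>M\<close>-th
  root of (a bound for) \<open>nrm (t ^ M)\<close> gives geometric decay.\<close>
lemma power_decay:
  assumes "nrm t \<le> 1" "nrm (t ^ M) < 1" "0 < M"
  shows "\<exists>c K. 0 < c \<and> c < 1 \<and> (\<forall>n. nrm (t ^ n) \<le> K * c ^ n)"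
proof -
  define b where "b = max (nrm (t ^ M)) (1 / 2)"
  define c where "c = root M b"
  have b: "0 < b" "b < 1" using assms(2) by (auto simp: b_def)
  have cM: "c ^ M = b" and c: "0 < c" "c < 1"
    using assms(3) b by (simp_all add: c_def real_root_gt_zero)
  have "nrm (t ^ n) \<le> 1 / b * c ^ n" for n
  proof -
    define q where "q = n div M"
    have n_le: "n \<le> M * Suc q" using assms(3) by (simp add: q_def dividend_less_times_div less_imp_le)
    have "t ^ n = (t ^ M) ^ q * t ^ (n mod M)"
      unfolding q_def by (metis mult_div_mod_eq power_add power_mult)
    then have "nrm (t ^ n) \<le> nrm ((t ^ M) ^ q) * nrm (t ^ (n mod M))" by (simp add: mult_le)
    also have "\<dots> \<le> b ^ q * 1"
    proof (rule mult_mono)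
      show "nrm ((t ^ M) ^ q) \<le> b ^ q"
        using power_le[of "t ^ M" q] nonneg by (simp add: b_def order_trans[OF _ power_mono])
      show "nrm (t ^ (n mod M)) \<le> 1"
        using power_le[of t "n mod M"] assms(1) nonneg by (meson order_trans power_le_one)
    qed (use b nonneg in simp_all)
    also have "\<dots> = 1 / b * c ^ (M * Suc q)"
      using b by (simp only: power_mult cM) simp
    also have "\<dots> \<le> 1 / b * c ^ n"
      using b c n_le by (intro mult_left_mono power_decreasing) auto
    finally show ?thesis .
  qed
  then show ?thesis using b c by (intro exI[of _ c] exI[of _ "1 / b"]) auto
qed

end

lemma is_ring_norm_powr:
  assumes "is_ring_norm nrm" "0 < s"
  shows "is_ring_norm (\<lambda>r. nrm r powr s)"
proof -
  interpret ring_norm nrm by (rule ring_norm.intro) fact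
  have mono: "nrm a \<le> nrm b \<Longrightarrow> nrm a powr s \<le> nrm b powr s" for a b
    using assms(2) nonneg by (simp add: powr_mono2)
  have "nrm (r + t) powr s \<le> max (nrm r powr s) (nrm t powr s)" for r t
    using add_le_max[of r t] mono by (metis max_def nle_le)
  moreover have "nrm (r * t) powr s \<le> nrm r powr s * nrm t powr s" for r t
    using mult_le[of r t] assms(2) nonneg by (simp add: powr_mono2 flip: powr_mult)
  ultimately show ?thesis
    unfolding is_ring_norm_def by (simp add: eq_0_iff minus one)
qed

lemma mult_pseudo_uniformizer_powr:
  assumes "is_ring_norm nrm" "0 < s" "mult_pseudo_uniformizer nrm w"
  shows "mult_pseudo_uniformizer (\<lambda>r. nrm r powr s) w"
proof -
  interpret ring_norm nrm by (rule ring_norm.intro) fact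
  have "nrm w powr s < 1 powr s"
    using assms mult_pseudo_uniformizer_pos[OF assms(3)]
    by (intro powr_less_mono2) (auto simp: mult_pseudo_uniformizer_def)
  then show ?thesis
    using assms(3) nonneg by (simp add: mult_pseudo_uniformizer_def powr_mult)
qed

lemma bounded_equivalent_powr:
  assumes "bounded_equivalent n1 n2" "\<forall>r. 0 \<le> n1 r" "0 < s"
  shows "bounded_equivalent (\<lambda>r. n1 r powr s) (\<lambda>r. n2 r powr s)"
proof -
  obtain C1 C2 where C: "C1 > 0" "C2 > 0" "\<forall>r. C1 * n1 r \<le> n2 r \<and> n2 r \<le> C2 * n1 r"
    using assms(1) unfolding bounded_equivalent_def by blast
  have "C1 powr s * n1 r powr s \<le> n2 r powr s \<and> n2 r powr s \<le> C2 powr s * n1 r powr s" for r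
  proof -
    have "0 \<le> C1 * n1 r" "C1 * n1 r \<le> n2 r" "n2 r \<le> C2 * n1 r" using C assms(2) by auto
    then have "(C1 * n1 r) powr s \<le> n2 r powr s" "n2 r powr s \<le> (C2 * n1 r) powr s"
      using assms(3) by (simp_all add: powr_mono2)
    then show ?thesis using C assms(2) by (simp add: powr_mult)
  qed
  then show ?thesis
    unfolding bounded_equivalent_def using C by (intro exI[of _ "C1 powr s"] exI[of _ "C2 powr s"]) auto
qed

lemma norm_complete_powr:
  assumes "norm_complete nrm" "\<forall>r. 0 \<le> nrm r" "0 < s"
  shows "norm_complete (\<lambda>r. nrm r powr s)"
  unfolding norm_complete_def
proof (intro allI impI)
  fix X :: "nat \<Rightarrow> 'a"
  assume cauchy: "\<forall>e>0. \<exists>N. \<forall>m\<ge>N. \<forall>n\<ge>N. nrm (X m - X n) powr s < e"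
  have "\<exists>N. \<forall>m\<ge>N. \<forall>n\<ge>N. nrm (X m - X n) < e" if "e > 0" for e
  proof -
    obtain N where "\<forall>m\<ge>N. \<forall>n\<ge>N. nrm (X m - X n) powr s < e powr s"
      using cauchy[rule_format, of "e powr s"] \<open>e > 0\<close> by auto
    then show ?thesis using assms(2,3) \<open>e > 0\<close> by (metis powr_less_cancel2 less_eq_real_def)
  qed
  then obtain L where "(\<lambda>n. nrm (X n - L)) \<longlonglongrightarrow> 0"
    using assms(1) unfolding norm_complete_def by blast
  then have "(\<lambda>n. nrm (X n - L) powr s) \<longlonglongrightarrow> 0"
    using assms(2,3) by (intro tendsto_zero_powrI[OF _ tendsto_const]) auto
  then show "\<exists>L. (\<lambda>n. nrm (X n - L) powr s) \<longlonglongrightarrow> 0" by blast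
qed

lemma norm_complete_bounded_equivalent:
  assumes "bounded_equivalent n1 n2" "norm_complete n1" "\<forall>r. 0 \<le> n1 r"
  shows "norm_complete n2"
  unfolding norm_complete_def
proof (intro allI impI)
  obtain C1 C2 where C: "C1 > 0" "C2 > 0" "\<And>r. C1 * n1 r \<le> n2 r" "\<And>r. n2 r \<le> C2 * n1 r"
    using assms(1) unfolding bounded_equivalent_def by blast
  fix X :: "nat \<Rightarrow> 'a"
  assume cauchy: "\<forall>e>0. \<exists>N. \<forall>m\<ge>N. \<forall>n\<ge>N. n2 (X m - X n) < e"
  have "\<exists>N. \<forall>m\<ge>N. \<forall>n\<ge>N. n1 (X m - X n) < e" if "e > 0" for e
  proof -
    obtain N where "\<forall>m\<ge>N. \<forall>n\<ge>N. n2 (X m - X n) < C1 * e"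
      using cauchy[rule_format, of "C1 * e"] C(1) \<open>e > 0\<close> by auto
    then show ?thesis using C(1,3) by (metis mult_less_cancel_left_pos order_le_less_trans)
  qed
  then obtain L where L: "(\<lambda>n. n1 (X n - L)) \<longlonglongrightarrow> 0"
    using assms(2) unfolding norm_complete_def by blast
  have "(\<lambda>n. n2 (X n - L)) \<longlonglongrightarrow> 0"
  proof (rule tendsto_sandwich[OF _ _ tendsto_const])
    show "(\<lambda>n. C2 * n1 (X n - L)) \<longlonglongrightarrow> 0" using tendsto_mult_right_zero[OF L] .
    show "\<forall>\<^sub>F n in sequentially. 0 \<le> n2 (X n - L)"
      using C(1,3) assms(3) by (metis always_eventually mult_nonneg_nonneg less_imp_le order_trans)
  qed (use C(4) in auto)
  then show "\<exists>L. (\<lambda>n. n2 (X n - L)) \<longlonglongrightarrow> 0" by blast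
qed

section \<open>The operator norm of an equivalent module norm\<close>

definition operator_norm :: "('a::comm_ring_1 \<Rightarrow> real) \<Rightarrow> 'a \<Rightarrow> real" where
  "operator_norm N r = (SUP y\<in>- {0}. N (r * y) / N y)"

locale equivalent_module_norm = ring_norm nrm for nrm :: "'a::comm_ring_1 \<Rightarrow> real" +
  fixes N :: "'a \<Rightarrow> real" and K :: real
  assumes le_N: "nrm y \<le> N y"
    and N_le: "N y \<le> K * nrm y"
    and N_add: "N (y + z) \<le> max (N y) (N z)"
    and N_mult: "N (r * y) \<le> nrm r * N y"
begin

lemma N_nonneg: "0 \<le> N y"
  using le_N[of y] nonneg[of y] by linarith

lemma N_pos: "y \<noteq> 0 \<Longrightarrow> 0 < N y"
  using le_N[of y] nonneg[of y] eq_0_iff[of y] by linarith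

lemma N_zero: "N 0 = 0"
  using N_le[of 0] N_nonneg[of 0] by (simp add: zero)

lemma K_pos: "0 < K"
proof -
  have "N 1 \<le> K" using N_le[of 1] by (simp add: one)
  then show ?thesis using le_N[of 1] one by linarith
qed

lemma N_minus: "N (- y) = N y"
proof -
  have le: "N (- z) \<le> N z" for z
    using N_mult[of "- 1" z] by (simp add: minus one)
  show ?thesis using le[of y] le[of "- y"] by simp
qed

lemma operator_norm_upper:
  assumes "y \<noteq> 0"
  shows "N (r * y) / N y \<le> operator_norm N r"
  unfolding operator_norm_def
proof (rule cSUP_upper)
  have "N (r * z) / N z \<le> nrm r" if "z \<noteq> 0" for z
    using N_mult[of r z] N_pos[OF that] by (simp add: pos_divide_le_eq)
  then show "bdd_above ((\<lambda>y. N (r * y) / N y) ` (- {0}))" by (intro bdd_aboveI2) auto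
qed (use assms in simp)

lemma nonzero_elements_nonempty: "- {0::'a} \<noteq> {}"
proof -
  have "(1::'a) \<in> - {0}" by (simp add: one_nonzero)
  then show ?thesis by blast
qed

lemma operator_norm_least:
  assumes "\<And>y. y \<noteq> 0 \<Longrightarrow> N (r * y) \<le> B * N y"
  shows "operator_norm N r \<le> B"
  unfolding operator_norm_def
proof (rule cSUP_least[OF nonzero_elements_nonempty])
  fix y :: 'a assume "y \<in> - {0}"
  then have "y \<noteq> 0" by simp
  then show "N (r * y) / N y \<le> B"
    using assms[of y] N_pos[of y] by (simp add: pos_divide_le_eq)
qed

lemma operator_norm_nonneg: "0 \<le> operator_norm N r"
proof -
  have "0 \<le> N (r * 1) / N 1" using N_nonneg by simp
  then show ?thesis using operator_norm_upper[OF one_nonzero, of r] by linarith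
qed

lemma N_mult_le_operator_norm: "N (r * y) \<le> operator_norm N r * N y"
proof (cases "y = 0")
  case False
  then show ?thesis
    using operator_norm_upper[OF False, of r] N_pos[OF False] by (simp add: pos_divide_le_eq)
qed (simp add: N_zero)

lemma operator_norm_le: "operator_norm N r \<le> nrm r"
  by (rule operator_norm_least) (rule N_mult)

lemma le_operator_norm: "nrm r \<le> K * operator_norm N r"
proof -
  have "nrm r \<le> N r" by (rule le_N)
  also have "\<dots> \<le> operator_norm N r * N 1" using N_mult_le_operator_norm[of r 1] by simp
  also have "\<dots> \<le> operator_norm N r * K"
    by (rule mult_left_mono[OF _ operator_norm_nonneg]) (use N_le[of 1] one in simp)
  finally show ?thesis by (simp only: mult.commute)
qed

lemma is_ring_norm_operator_norm: "is_ring_norm (operator_norm N)"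
  unfolding is_ring_norm_def
proof (intro conjI allI)
  fix r s :: 'a
  show "0 \<le> operator_norm N r" by (rule operator_norm_nonneg)
  show "operator_norm N r = 0 \<longleftrightarrow> r = 0"
    using le_operator_norm[of r] operator_norm_le[of 0] operator_norm_nonneg[of 0] eq_0_iff[of r] nonneg[of r]
    by (auto simp: zero)
  show "operator_norm N (- r) = operator_norm N r"
    unfolding operator_norm_def using N_minus by simp
  show "operator_norm N (r + s) \<le> max (operator_norm N r) (operator_norm N s)"
  proof (rule operator_norm_least)
    fix y
    have "N ((r + s) * y) \<le> max (N (r * y)) (N (s * y))" using N_add by (simp add: distrib_right)
    also have "\<dots> \<le> max (operator_norm N r * N y) (operator_norm N s * N y)"
      by (intro max.mono N_mult_le_operator_norm)
    finally show "N ((r + s) * y) \<le> max (operator_norm N r) (operator_norm N s) * N y"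
      using N_nonneg by (simp add: max_mult_distrib_right)
  qed
  show "operator_norm N (r * s) \<le> operator_norm N r * operator_norm N s"
  proof (rule operator_norm_least)
    fix y
    have "N (r * (s * y)) \<le> operator_norm N r * N (s * y)" by (rule N_mult_le_operator_norm)
    also have "\<dots> \<le> operator_norm N r * (operator_norm N s * N y)"
      by (rule mult_left_mono[OF N_mult_le_operator_norm operator_norm_nonneg])
    finally show "N (r * s * y) \<le> operator_norm N r * operator_norm N s * N y" by (simp add: mult_ac)
  qed
  show "operator_norm N 1 = 1"
    using operator_norm_least[of 1 1] operator_norm_upper[OF one_nonzero, of 1] N_pos[OF one_nonzero]
    by simp
qed

lemma bounded_equivalent_operator_norm: "bounded_equivalent nrm (operator_norm N)"
  unfolding bounded_equivalent_def
proof (intro exI conjI allI)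
  fix r
  show "1 / K * nrm r \<le> operator_norm N r" using le_operator_norm K_pos by (simp add: field_simps)
  show "operator_norm N r \<le> 1 * nrm r" using operator_norm_le by simp
qed (use K_pos in simp_all)

lemma N_mult_pseudo_uniformizer:
  assumes "mult_pseudo_uniformizer nrm w"
  shows "N (w * y) = nrm w * N y"
proof (rule antisym)
  obtain v where v: "w * v = 1" using assms by (auto simp: mult_pseudo_uniformizer_def elim!: dvdE)
  have "nrm (w * v) = nrm w * nrm v" using assms by (simp add: mult_pseudo_uniformizer_def)
  then have wv: "nrm w * nrm v = 1" using v by (simp add: one)
  have "v * (w * y) = (w * v) * y" by (simp add: mult_ac)
  then have "N y \<le> nrm v * N (w * y)" using N_mult[of v "w * y"] v by simp
  then have "nrm w * N y \<le> nrm w * (nrm v * N (w * y))"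
    using mult_pseudo_uniformizer_pos[OF assms] by simp
  then show "nrm w * N y \<le> N (w * y)" by (simp add: wv flip: mult.assoc)
qed (rule N_mult)

lemma mult_pseudo_uniformizer_operator_norm:
  assumes "mult_pseudo_uniformizer nrm w"
  shows "mult_pseudo_uniformizer (operator_norm N) w"
proof -
  have w_pos: "0 < nrm w" by (rule mult_pseudo_uniformizer_pos[OF assms])
  have N_w: "N (w * r * y) = nrm w * N (r * y)" for r y
    using N_mult_pseudo_uniformizer[OF assms] by (simp add: mult.assoc)
  have op_w: "operator_norm N (w * r) = nrm w * operator_norm N r" for r
  proof (rule antisym)
    show "operator_norm N (w * r) \<le> nrm w * operator_norm N r"
      using N_w N_mult_le_operator_norm w_pos
      by (intro operator_norm_least) (simp add: mult.assoc mult_left_mono)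
    have "operator_norm N r \<le> operator_norm N (w * r) / nrm w"
    proof (rule operator_norm_least)
      fix y
      have "N (r * y) * nrm w \<le> operator_norm N (w * r) * N y"
        using N_mult_le_operator_norm[of "w * r" y] N_w[of r y] by (simp add: mult.commute)
      then show "N (r * y) \<le> operator_norm N (w * r) / nrm w * N y"
        using w_pos by (simp add: pos_le_divide_eq)
    qed
    then show "nrm w * operator_norm N r \<le> operator_norm N (w * r)" using w_pos by (simp add: field_simps)
  qed
  have "operator_norm N w = nrm w"
    using op_w[of 1] is_ring_norm_operator_norm by (simp add: is_ring_norm_def)
  then show ?thesis
    using assms operator_norm_le[of w] op_w by (simp add: mult_pseudo_uniformizer_def)
qed

end

section \<open>Continuous homomorphisms from the p-adic integers\<close>

locale Zp_hom =
  fixes p :: nat and \<phi> :: "(nat \<Rightarrow> int) \<Rightarrow> 'a::comm_ring_1"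
  assumes p_ge_2: "2 \<le> p" and hom: "zp_ring_hom p \<phi>"
begin

lemma p_pos: "0 < p"
  using p_ge_2 by simp

lemma hom_add: "x \<in> Zp p \<Longrightarrow> y \<in> Zp p \<Longrightarrow> \<phi> (zp_add p x y) = \<phi> x + \<phi> y"
  and hom_mul: "x \<in> Zp p \<Longrightarrow> y \<in> Zp p \<Longrightarrow> \<phi> (zp_mul p x y) = \<phi> x * \<phi> y"
  and hom_one: "\<phi> (zp_one p) = 1"
  using hom by (simp_all add: zp_ring_hom_def)

lemma hom_zero: "\<phi> (zp_zero p) = 0"
proof -
  have "\<phi> (zp_add p (zp_zero p) (zp_zero p)) = \<phi> (zp_zero p) + \<phi> (zp_zero p)"
    by (rule hom_add[OF zp_zero_in_Zp[OF p_pos] zp_zero_in_Zp[OF p_pos]])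
  moreover have "zp_add p (zp_zero p) (zp_zero p) = zp_zero p"
    by (simp add: zp_add_def zp_zero_def)
  ultimately show ?thesis by simp
qed

lemma hom_zp_of_int: "\<phi> (zp_of_int p z) = of_int z"
proof -
  have nat_case: "\<phi> (zp_of_int p (int n)) = of_nat n" for n
  proof (induction n)
    case 0
    then show ?case by (simp add: zp_of_int_0 hom_zero)
  next
    case (Suc n)
    have "zp_of_int p (int (Suc n)) = zp_add p (zp_of_int p (int n)) (zp_of_int p 1)"
      by (simp add: zp_add_zp_of_int add.commute)
    then have "\<phi> (zp_of_int p (int (Suc n))) = \<phi> (zp_of_int p (int n)) + \<phi> (zp_of_int p 1)"
      using hom_add zp_of_int_in_Zp[OF p_pos] by simp
    then show ?case using Suc by (simp add: zp_of_int_1 hom_one)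
  qed
  show ?thesis
  proof (cases "0 \<le> z")
    case True
    then show ?thesis using nat_case[of "nat z"] by simp
  next
    case False
    define n where "n = nat (- z)"
    have z: "z = - int n" using False by (simp add: n_def)
    have "zp_add p (zp_of_int p z) (zp_of_int p (int n)) = zp_of_int p 0"
      using z by (simp add: zp_add_zp_of_int)
    then have "\<phi> (zp_of_int p z) + \<phi> (zp_of_int p (int n)) = \<phi> (zp_of_int p 0)"
      using hom_add zp_of_int_in_Zp[OF p_pos] by metis
    then have "\<phi> (zp_of_int p z) = - of_nat n"
      using nat_case[of n] by (simp add: zp_of_int_0 hom_zero eq_neg_iff_add_eq_0)
    then show ?thesis using z by simp
  qed
qed

lemma norm_le_padic_norm_of_decay:
  assumes "is_ring_norm nrm" "0 < c" "0 < s" "c powr s = 1 / real p"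
    and "x \<in> Zp p" "nrm (\<phi> x) \<le> c ^ zp_ord p x"
  shows "nrm (\<phi> x) powr s \<le> padic_norm p x"
proof (cases "x = zp_zero p")
  case True
  then show ?thesis using assms(1) by (simp add: hom_zero ring_norm.zero[OF ring_norm.intro] padic_norm_def)
next
  case False
  have "nrm (\<phi> x) powr s \<le> (c ^ zp_ord p x) powr s"
    using assms ring_norm.nonneg[OF ring_norm.intro] by (intro powr_mono2) auto
  also have "\<dots> = (c powr s) ^ zp_ord p x"
    using assms(2) by (simp add: powr_realpow[symmetric] powr_powr mult.commute)
  also have "\<dots> = padic_norm p x"
    using False assms(4) p_pos by (simp add: padic_norm_eq)
  finally show ?thesis .
qed

end

locale continuous_Zp_hom = Zp_hom p \<phi> + ring_norm nrm
  for p :: nat and \<phi> :: "(nat \<Rightarrow> int) \<Rightarrow> 'a::comm_ring_1" and nrm :: "'a \<Rightarrow> real" +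
  assumes continuous: "zp_continuous p nrm \<phi>"
begin

lemma eventually_norm_lt_1: "\<exists>M>0. \<forall>y\<in>Zp p. y M = 0 \<longrightarrow> nrm (\<phi> y) < 1"
proof -
  have "\<exists>d>0. \<forall>y\<in>Zp p. padic_norm p (zp_add p y (zp_neg p (zp_zero p))) < d
      \<longrightarrow> nrm (\<phi> y - \<phi> (zp_zero p)) < 1"
    using continuous[unfolded zp_continuous_def] zp_zero_in_Zp[OF p_pos] zero_less_one by blast
  then obtain d where d: "d > 0" "\<forall>y\<in>Zp p. padic_norm p y < d \<longrightarrow> nrm (\<phi> y) < 1"
    by (auto simp: zp_add_zp_neg_zp_zero hom_zero)
  have "1 / real p < 1" using p_ge_2 by simp
  then obtain m where m: "(1 / real p) ^ m < d"
    using real_arch_pow_inv[OF d(1)] by blast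
  have "nrm (\<phi> y) < 1" if y: "y \<in> Zp p" "y (Suc m) = 0" for y
  proof -
    have "padic_norm p y \<le> (1 / real p) ^ Suc m" by (rule padic_norm_le[OF p_ge_2 y])
    also have "\<dots> \<le> (1 / real p) ^ m" using p_ge_2 by (intro power_decreasing) auto
    finally show ?thesis using m d(2) y(1) by auto
  qed
  then show ?thesis by blast
qed

text \<open>Split \<open>u\<close> into an integer, whose image has norm at most one, and a multiple of \<open>p ^ M\<close>.\<close>
lemma norm_hom_le_1:
  assumes "u \<in> Zp p"
  shows "nrm (\<phi> u) \<le> 1"
proof -
  obtain M where M: "\<forall>y\<in>Zp p. y M = 0 \<longrightarrow> nrm (\<phi> y) < 1" using eventually_norm_lt_1 by blast
  obtain y where y: "y \<in> Zp p" "y M = 0" "zp_add p (zp_of_int p (u M)) y = u"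
    using Zp_split_at[OF assms p_pos] by blast
  have "\<phi> u = \<phi> (zp_of_int p (u M)) + \<phi> y"
    using hom_add[OF zp_of_int_in_Zp[OF p_pos, of "u M"] y(1)] unfolding y(3) .
  also have "\<dots> = of_nat (nat (u M)) + \<phi> y"
    using Zp_memD[OF assms, of M] by (simp add: hom_zp_of_int)
  finally have "nrm (\<phi> u) \<le> max (nrm (of_nat (nat (u M)))) (nrm (\<phi> y))"
    by (simp add: add_le_max)
  moreover have "nrm (\<phi> y) < 1" using M y(1,2) by blast
  ultimately show ?thesis using of_nat_le_1[of "nat (u M)"] by simp
qed

lemma norm_hom_decay: "\<exists>c K. 0 < c \<and> c < 1 \<and> (\<forall>x\<in>Zp p. nrm (\<phi> x) \<le> K * c ^ zp_ord p x)"
proof -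
  obtain M where M: "M > 0" "\<forall>y\<in>Zp p. y M = 0 \<longrightarrow> nrm (\<phi> y) < 1"
    using eventually_norm_lt_1 by blast
  have \<phi>_p_power: "\<phi> (zp_of_int p (int p ^ n)) = of_nat p ^ n" for n
    by (simp add: hom_zp_of_int)
  have "nrm (of_nat p) \<le> 1" by (rule of_nat_le_1)
  moreover have "nrm (of_nat p ^ M) < 1"
  proof -
    have "zp_of_int p (int p ^ M) M = 0" by (simp add: zp_of_int_def)
    then have "nrm (\<phi> (zp_of_int p (int p ^ M))) < 1" using M(2) zp_of_int_in_Zp[OF p_pos] by blast
    then show ?thesis by (simp add: \<phi>_p_power)
  qed
  ultimately obtain c K where cK: "0 < c" "c < 1" "\<And>n. nrm (of_nat p ^ n) \<le> K * c ^ n"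
    using power_decay M(1) by blast
  have "nrm (\<phi> x) \<le> K * c ^ zp_ord p x" if x: "x \<in> Zp p" for x
  proof -
    define n where "n = zp_ord p x"
    obtain u where u: "u \<in> Zp p" "x = zp_mul p (zp_of_int p (int p ^ n)) u"
      using Zp_factor_p_power[OF x Zp_at_zp_ord[OF x] p_pos] unfolding n_def by blast
    have "\<phi> x = of_nat p ^ n * \<phi> u"
      unfolding u(2) using hom_mul[OF zp_of_int_in_Zp[OF p_pos] u(1)] \<phi>_p_power by simp
    then have "nrm (\<phi> x) \<le> nrm (of_nat p ^ n) * nrm (\<phi> u)" by (simp add: mult_le)
    also have "\<dots> \<le> nrm (of_nat p ^ n)"
      using norm_hom_le_1[OF u(1)] nonneg by (simp add: mult_left_le)
    finally show ?thesis using cK(3) unfolding n_def by (rule order_trans)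
  qed
  then show ?thesis using cK(1,2) by blast
qed
end

section \<open>The weighted supremum norm\<close>

definition Zp_weighted_norm ::
    "nat \<Rightarrow> ((nat \<Rightarrow> int) \<Rightarrow> 'a::comm_ring_1) \<Rightarrow> ('a \<Rightarrow> real) \<Rightarrow> real \<Rightarrow> 'a \<Rightarrow> real" where
  "Zp_weighted_norm p \<phi> nrm c y = (SUP x\<in>Zp p. nrm (\<phi> x * y) / c ^ zp_ord p x)"

locale decaying_Zp_hom = Zp_hom p \<phi> + ring_norm nrm
  for p :: nat and \<phi> :: "(nat \<Rightarrow> int) \<Rightarrow> 'a::comm_ring_1" and nrm :: "'a \<Rightarrow> real" +
  fixes c K :: real
  assumes c_pos: "0 < c" and c_lt_1: "c < 1"
    and decay: "x \<in> Zp p \<Longrightarrow> nrm (\<phi> x) \<le> K * c ^ zp_ord p x"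
begin

abbreviation W :: "'a \<Rightarrow> real" where
  "W \<equiv> Zp_weighted_norm p \<phi> nrm c"

lemma weighted_term_le:
  assumes "x \<in> Zp p"
  shows "nrm (\<phi> x * y) / c ^ zp_ord p x \<le> K * nrm y"
proof -
  have "nrm (\<phi> x * y) \<le> nrm (\<phi> x) * nrm y" by (rule mult_le)
  also have "\<dots> \<le> K * c ^ zp_ord p x * nrm y" using decay[OF assms] nonneg by (rule mult_right_mono)
  finally show ?thesis using c_pos by (simp add: pos_divide_le_eq mult_ac)
qed

lemma weighted_upper:
  assumes "x \<in> Zp p"
  shows "nrm (\<phi> x * y) / c ^ zp_ord p x \<le> W y"
  unfolding Zp_weighted_norm_def
proof (rule cSUP_upper)
  show "bdd_above ((\<lambda>x. nrm (\<phi> x * y) / c ^ zp_ord p x) ` Zp p)"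
    by (rule bdd_aboveI2[of _ _ "K * nrm y"]) (rule weighted_term_le)
qed (rule assms)

lemma weighted_least:
  assumes "\<And>x. x \<in> Zp p \<Longrightarrow> nrm (\<phi> x * y) / c ^ zp_ord p x \<le> B"
  shows "W y \<le> B"
  unfolding Zp_weighted_norm_def
proof (rule cSUP_least)
  show "Zp p \<noteq> {}" using zp_zero_in_Zp[OF p_pos] by blast
qed (rule assms)

lemma equivalent_module_norm_weighted: "equivalent_module_norm nrm W K"
proof unfold_locales
  fix r y z :: 'a
  show "nrm y \<le> W y"
    using weighted_upper[OF zp_one_in_Zp[OF p_pos], of y] by (simp add: hom_one zp_ord_zp_one[OF p_ge_2])
  show "W y \<le> K * nrm y" by (rule weighted_least[OF weighted_term_le])
  show "W (y + z) \<le> max (W y) (W z)"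
  proof (rule weighted_least)
    fix x assume x: "x \<in> Zp p"
    have mono: "a \<le> b \<Longrightarrow> a / c ^ zp_ord p x \<le> b / c ^ zp_ord p x" for a b
      using c_pos by (simp add: divide_right_mono)
    have "nrm (\<phi> x * (y + z)) \<le> nrm (\<phi> x * y) \<or> nrm (\<phi> x * (y + z)) \<le> nrm (\<phi> x * z)"
      using add_le_max[of "\<phi> x * y" "\<phi> x * z"] by (simp add: distrib_left le_max_iff_disj)
    then have "nrm (\<phi> x * (y + z)) / c ^ zp_ord p x \<le> W y \<or> nrm (\<phi> x * (y + z)) / c ^ zp_ord p x \<le> W z"
      using mono weighted_upper[OF x, of y] weighted_upper[OF x, of z] by (meson order_trans)
    then show "nrm (\<phi> x * (y + z)) / c ^ zp_ord p x \<le> max (W y) (W z)"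
      by (simp add: le_max_iff_disj)
  qed
  show "W (r * y) \<le> nrm r * W y"
  proof (rule weighted_least)
    fix x assume x: "x \<in> Zp p"
    have "nrm (\<phi> x * (r * y)) \<le> nrm r * nrm (\<phi> x * y)"
      using mult_le[of r "\<phi> x * y"] by (simp add: mult_ac)
    then have "nrm (\<phi> x * (r * y)) / c ^ zp_ord p x \<le> nrm r * (nrm (\<phi> x * y) / c ^ zp_ord p x)"
      using c_pos by (simp add: divide_le_cancel)
    also have "\<dots> \<le> nrm r * W y" using weighted_upper[OF x] nonneg by (rule mult_left_mono)
    finally show "nrm (\<phi> x * (r * y)) / c ^ zp_ord p x \<le> nrm r * W y" .
  qed
qed

text \<open>Since \<open>zp_ord\<close> is superadditive, multiplying by \<open>\<phi> x\<close> shifts every weight by at least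
  \<open>zp_ord p x\<close>.\<close>
lemma weighted_hom_mult:
  assumes x: "x \<in> Zp p"
  shows "W (\<phi> x * z) \<le> c ^ zp_ord p x * W z"
proof (rule weighted_least)
  fix x' assume x': "x' \<in> Zp p"
  define x'' where "x'' = zp_mul p x' x"
  have x'': "x'' \<in> Zp p" unfolding x''_def by (rule zp_mul_in_Zp[OF x' x p_pos])
  have \<phi>x'': "\<phi> x' * (\<phi> x * z) = \<phi> x'' * z" unfolding x''_def using hom_mul[OF x' x] by (simp add: mult_ac)
  show "nrm (\<phi> x' * (\<phi> x * z)) / c ^ zp_ord p x' \<le> c ^ zp_ord p x * W z"
  proof (cases "x'' = zp_zero p")
    case True
    then show ?thesis
      using \<phi>x'' c_pos equivalent_module_norm.N_nonneg[OF equivalent_module_norm_weighted]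
      by (simp add: hom_zero zero)
  next
    case False
    have "zp_ord p x' + zp_ord p x \<le> zp_ord p x''"
      unfolding x''_def by (rule zp_ord_mul[OF x' x p_pos False[unfolded x''_def]])
    then have "c ^ zp_ord p x'' \<le> c ^ zp_ord p x' * c ^ zp_ord p x"
      using c_pos c_lt_1 by (simp add: power_decreasing flip: power_add)
    then have "nrm (\<phi> x'' * z) * c ^ zp_ord p x'' \<le> nrm (\<phi> x'' * z) * (c ^ zp_ord p x' * c ^ zp_ord p x)"
      using nonneg by (rule mult_left_mono)
    then have "nrm (\<phi> x'' * z) / c ^ zp_ord p x' \<le> c ^ zp_ord p x * (nrm (\<phi> x'' * z) / c ^ zp_ord p x'')"
      using c_pos by (simp add: field_simps mult_ac)
    also have "\<dots> \<le> c ^ zp_ord p x * W z"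
      using c_pos by (intro mult_left_mono weighted_upper[OF x'']) simp
    finally show ?thesis unfolding \<phi>x'' .
  qed
qed

lemma exists_equivalent_norm_with_decay:
  "\<exists>nrm'. is_ring_norm nrm' \<and> bounded_equivalent nrm nrm' \<and>
     (\<forall>w. mult_pseudo_uniformizer nrm w \<longrightarrow> mult_pseudo_uniformizer nrm' w) \<and>
     (\<forall>x\<in>Zp p. nrm' (\<phi> x) \<le> c ^ zp_ord p x)"
proof -
  interpret equivalent_module_norm nrm W K by (rule equivalent_module_norm_weighted)
  have "operator_norm W (\<phi> x) \<le> c ^ zp_ord p x" if "x \<in> Zp p" for x
    using weighted_hom_mult[OF that] by (intro operator_norm_least)
  then show ?thesis
    using is_ring_norm_operator_norm bounded_equivalent_operator_norm
      mult_pseudo_uniformizer_operator_norm by blast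
qed

end

lemma powr_ln_ratio:
  fixes c q :: real
  assumes "0 < c" "c < 1" "0 < q"
  shows "c powr (ln q / ln (1 / c)) = 1 / q"
proof -
  have "ln (1 / c) = - ln c" using assms(1) by (simp add: ln_div)
  moreover have "ln c < 0" using assms(1,2) by simp
  ultimately have "ln q / ln (1 / c) * ln c = - ln q" by simp
  then show ?thesis using assms by (simp add: powr_def exp_minus inverse_eq_divide)
qed

theorem mainTheorem3:
  fixes nrm :: "'a::comm_ring_1 \<Rightarrow> real"
    and w :: 'a
    and p :: nat
    and \<phi> :: "(nat \<Rightarrow> int) \<Rightarrow> 'a"
  assumes "prime p"
    and "noetherian_ring TYPE('a)"
    and "banach_tate_ring nrm"
    and "mult_pseudo_uniformizer nrm w"
    and "zp_ring_hom p \<phi>"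
    and "zp_continuous p nrm \<phi>"
  shows "\<exists>nrm' :: 'a \<Rightarrow> real.
           banach_tate_Zp_algebra p nrm' \<phi> \<and>
           (\<exists>s::real. s > 0 \<and> bounded_equivalent (\<lambda>r. nrm r powr s) nrm') \<and>
           mult_pseudo_uniformizer nrm' w"
proof -
  have rn: "is_ring_norm nrm" and complete: "norm_complete nrm"
    using assms(3) by (auto simp: banach_tate_ring_def)
  interpret continuous_Zp_hom p \<phi> nrm
    using prime_ge_2_nat[OF assms(1)] rn assms(5,6) by unfold_locales
  obtain c K where c: "0 < c" "c < 1" and "\<forall>x\<in>Zp p. nrm (\<phi> x) \<le> K * c ^ zp_ord p x"
    using norm_hom_decay by blast
  then interpret decaying_Zp_hom p \<phi> nrm c K by unfold_locales auto
  obtain N where N: "is_ring_norm N" "bounded_equivalent nrm N" "mult_pseudo_uniformizer N w"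
    and N_decay: "\<forall>x\<in>Zp p. N (\<phi> x) \<le> c ^ zp_ord p x"
    using exists_equivalent_norm_with_decay assms(4) by blast
  define s where "s = ln (real p) / ln (1 / c)"
  have s: "0 < s" and cs: "c powr s = 1 / real p"
    using c p_ge_2 powr_ln_ratio[of c "real p"] by (simp_all add: s_def divide_pos_pos)
  have equiv: "bounded_equivalent (\<lambda>r. nrm r powr s) (\<lambda>r. N r powr s)"
    using bounded_equivalent_powr[OF N(2)] nonneg s by blast
  moreover have "norm_complete (\<lambda>r. N r powr s)"
    using norm_complete_bounded_equivalent[OF equiv] norm_complete_powr[OF complete] nonneg s by simp
  moreover have "\<forall>x\<in>Zp p. N (\<phi> x) powr s \<le> padic_norm p x"
    using norm_le_padic_norm_of_decay[OF N(1) c(1) s cs] N_decay by blast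
  ultimately show ?thesis
    using is_ring_norm_powr[OF N(1) s] mult_pseudo_uniformizer_powr[OF N(1) s N(3)] hom s
    unfolding banach_tate_Zp_algebra_def banach_tate_ring_def by blast
qed

end
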